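(* For integers $1\le r\le n-1$, the convex hull of $\{\frac{1}{r+1}A: A\in RB(r+1,n)\}$ is contained in the convex hull of $\{\frac1r A: A\in RB(r,n)\}$.
   Context: $RB(r,n)$ is the set of $n\times n$ $0/1$ matrices all of whose row and column sums equal $r$. *)

theory Defs
  imports "HOL-Analysis.Analysis"
begin

text \<open>RB(r,n): n x n 0/1 matrices with all row and column sums equal to r.
  The dimension n is CARD('n) of the finite index type 'n.\<close>
definition RB :: "nat \<Rightarrow> (real^'n^'n) set" where
  "RB r = {A. (\<forall>i j. A $ i $ j = 0 \<or> A $ i $ j = 1)
            \<and> (\<forall>i. (\<Sum>j\<in>UNIV. A $ i $ j) = real r)
            \<and> (\<forall>j. (\<Sum>i\<in>UNIV. A $ i $ j) = real r)}"

end

theory Submission imports Defs begin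

text \<open>By Hall's marriage theorem every matrix in $RB(k+1)$ dominates a permutation matrix
  whose removal leaves a matrix in $RB(k)$; iterating, $A \<in> RB(r+1)$ is a sum of $r+1$
  permutation matrices $P_0, \<dots>, P_r$, each $A - P_l$ lies in $RB(r)$, and
  $\frac{1}{r+1} A = \frac{1}{r+1} \sum_l \frac{1}{r} (A - P_l)$ is a convex combination
  of points $\frac1r B$ with $B \in RB(r)$.\<close>

definition hall_condition :: "'a set \<Rightarrow> ('a \<Rightarrow> 'b set) \<Rightarrow> bool" where
  "hall_condition I N \<longleftrightarrow> (\<forall>S\<subseteq>I. card S \<le> card (\<Union>(N ` S)))"

lemma hall_condition_subset: "hall_condition I N \<Longrightarrow> J \<subseteq> I \<Longrightarrow> hall_condition J N"
  unfolding hall_condition_def by blast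

lemma hall_condition_Diff_critical:
  assumes "finite I" "\<forall>i\<in>I. finite (N i)" "hall_condition I N"
    and S: "S \<subseteq> I" "card (\<Union>(N ` S)) = card S"
  shows "hall_condition (I - S) (\<lambda>i. N i - \<Union>(N ` S))"
  unfolding hall_condition_def
proof (intro allI impI)
  fix T assume T: "T \<subseteq> I - S"
  have "finite T" "finite S" using T S(1) assms(1) by (auto intro: finite_subset)
  then have fin: "finite (\<Union>(N ` (T \<union> S)))" using T S(1) assms(2) by auto
  have "T \<inter> S = {}" using T by blast
  then have "card T + card S = card (T \<union> S)"
    using \<open>finite T\<close> \<open>finite S\<close> by (simp add: card_Un_disjoint)
  also have "\<dots> \<le> card (\<Union>(N ` (T \<union> S)))"
    using assms(3) T S(1) unfolding hall_condition_def by (metis Diff_subset Un_subset_iff order_trans)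
  also have "\<dots> = card (\<Union>(N ` (T \<union> S)) - \<Union>(N ` S)) + card S"
  proof -
    have "\<Union>(N ` S) \<subseteq> \<Union>(N ` (T \<union> S))" by auto
    then have "card (\<Union>(N ` S)) \<le> card (\<Union>(N ` (T \<union> S)))" using fin by (rule card_mono[rotated])
    then show ?thesis using S(2) fin \<open>\<Union>(N ` S) \<subseteq> _\<close>
      by (simp add: card_Diff_subset finite_subset)
  qed
  finally show "card T \<le> card (\<Union>((\<lambda>i. N i - \<Union>(N ` S)) ` T))"
    by (simp add: Un_Diff)
qed

lemma hall_condition_Diff_single:
  assumes "finite I" "\<forall>i\<in>I. finite (N i)" "i0 \<in> I"
    and strict: "\<forall>S\<subseteq>I. S \<noteq> {} \<longrightarrow> S \<noteq> I \<longrightarrow> card S < card (\<Union>(N ` S))"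
  shows "hall_condition (I - {i0}) (\<lambda>i. N i - {y})"
  unfolding hall_condition_def
proof (intro allI impI)
  fix T assume T: "T \<subseteq> I - {i0}"
  show "card T \<le> card (\<Union>((\<lambda>i. N i - {y}) ` T))"
  proof (cases "T = {}")
    case False
    have "finite T" using T assms(1) by (auto intro: finite_subset)
    then have "finite (\<Union>(N ` T))" using T assms(2) by auto
    then have "card (\<Union>(N ` T)) - 1 \<le> card (\<Union>(N ` T) - {y})"
      by (simp add: card_Diff_singleton_if)
    moreover have "card T < card (\<Union>(N ` T))" using strict T False assms(3) by auto
    moreover have "\<Union>((\<lambda>i. N i - {y}) ` T) = \<Union>(N ` T) - {y}" by auto
    ultimately show ?thesis by simp
  qed simp
qed

lemma inj_on_if_disjoint_images:
  assumes "inj_on f S" "inj_on g T" "f ` S \<subseteq> U" "g ` T \<inter> U = {}"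
  shows "inj_on (\<lambda>i. if i \<in> S then f i else g i) (S \<union> T)"
proof (rule inj_onI)
  fix x y assume x: "x \<in> S \<union> T" and y: "y \<in> S \<union> T"
    and eq: "(if x \<in> S then f x else g x) = (if y \<in> S then f y else g y)"
  show "x = y"
  proof (cases "x \<in> S"; cases "y \<in> S")
    assume "x \<in> S" "y \<in> S"
    then show ?thesis using eq assms(1) by (simp add: inj_on_eq_iff)
  next
    assume "x \<notin> S" "y \<notin> S"
    then show ?thesis using eq x y assms(2) by (simp add: inj_on_eq_iff)
  next
    assume "x \<in> S" "y \<notin> S"
    then show ?thesis using eq y assms(3,4) by auto
  next
    assume "x \<notin> S" "y \<in> S"
    then show ?thesis using eq x assms(3,4) by auto
  qed
qed

theorem marriage_theorem:
  assumes "finite I" "\<forall>i\<in>I. finite (N i)" "hall_condition I N"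
  shows "\<exists>f. inj_on f I \<and> (\<forall>i\<in>I. f i \<in> N i)"
  using assms
proof (induction "card I" arbitrary: I N rule: less_induct)
  case less
  consider (empty) "I = {}"
    | (critical) S where "S \<subseteq> I" "S \<noteq> {}" "S \<noteq> I" "card (\<Union>(N ` S)) = card S"
    | (strict) i0 where "i0 \<in> I" "\<forall>S\<subseteq>I. S \<noteq> {} \<longrightarrow> S \<noteq> I \<longrightarrow> card S < card (\<Union>(N ` S))"
    using less.prems(3) unfolding hall_condition_def by (metis all_not_in_conv le_neq_implies_less)
  then show ?case
  proof cases
    case empty
    then show ?thesis by simp
  next
    case critical
    define U where "U = \<Union>(N ` S)"
    have "finite S" using critical(1) less.prems(1) by (rule finite_subset)
    have "card S < card I" using critical less.prems(1) by (auto intro: psubset_card_mono)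
    then obtain f where f: "inj_on f S" "\<forall>i\<in>S. f i \<in> N i"
      using less.hyps[of S N] \<open>finite S\<close> critical(1) less.prems(2,3)
      by (auto intro: hall_condition_subset)
    have "I - S \<subset> I" using critical(1,2) by blast
    then have "card (I - S) < card I" using less.prems(1) by (rule psubset_card_mono[rotated])
    moreover have "hall_condition (I - S) (\<lambda>i. N i - U)"
      unfolding U_def using less.prems critical(1,4) by (rule hall_condition_Diff_critical)
    ultimately obtain g where g: "inj_on g (I - S)" "\<forall>i\<in>I - S. g i \<in> N i - U"
      using less.hyps[of "I - S" "\<lambda>i. N i - U"] less.prems(1,2) by auto
    have "inj_on (\<lambda>i. if i \<in> S then f i else g i) (S \<union> (I - S))"
      by (rule inj_on_if_disjoint_images[OF f(1) g(1), of U]) (use f(2) g(2) U_def in auto)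
    moreover have "S \<union> (I - S) = I" using critical(1) by blast
    ultimately show ?thesis using f(2) g(2) by auto
  next
    case strict
    have "card {i0} \<le> card (N i0)"
      using less.prems(3)[unfolded hall_condition_def, rule_format, of "{i0}"] strict(1) by simp
    then obtain y where y: "y \<in> N i0" by fastforce
    have "card (I - {i0}) < card I" using strict(1) less.prems(1) by (rule card_Diff1_less[rotated])
    moreover have "hall_condition (I - {i0}) (\<lambda>i. N i - {y})"
      using hall_condition_Diff_single less.prems(1,2) strict .
    ultimately obtain g where g: "inj_on g (I - {i0})" "\<forall>i\<in>I - {i0}. g i \<in> N i - {y}"
      using less.hyps[of "I - {i0}" "\<lambda>i. N i - {y}"] less.prems(1,2) by auto
    have "inj_on (g(i0 := y)) (insert i0 (I - {i0}))"
      using g by (auto simp: inj_on_def)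
    moreover have "insert i0 (I - {i0}) = I" using strict(1) by blast
    ultimately show ?thesis using g y by auto
  qed
qed

definition perm_matrix :: "('n::finite \<Rightarrow> 'n) \<Rightarrow> real^'n^'n" where
  "perm_matrix \<sigma> = (\<chi> i j. if j = \<sigma> i then 1 else 0)"

lemma perm_matrix_row_sum: "(\<Sum>j\<in>UNIV. perm_matrix \<sigma> $ i $ j) = 1"
  by (simp add: perm_matrix_def)

lemma perm_matrix_col_sum:
  assumes "bij \<sigma>" shows "(\<Sum>i\<in>UNIV. perm_matrix \<sigma> $ i $ j) = 1"
proof -
  have "(\<Sum>i\<in>UNIV. perm_matrix \<sigma> $ i $ j) = (\<Sum>i\<in>UNIV. if i = inv \<sigma> j then 1 else 0)"
    by (rule sum.cong) (auto simp: perm_matrix_def bij_inv_eq_iff[OF assms])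
  then show ?thesis by simp
qed

lemma RB_entry: "A \<in> RB k \<Longrightarrow> A $ i $ j = 0 \<or> A $ i $ j = 1"
  unfolding RB_def by blast

lemma RB_nonneg: "A \<in> RB k \<Longrightarrow> 0 \<le> A $ i $ j"
  using RB_entry[of A k i j] by auto

lemma RB_row_sum: "A \<in> RB k \<Longrightarrow> (\<Sum>j\<in>UNIV. A $ i $ j) = real k"
  unfolding RB_def by blast

lemma RB_col_sum: "A \<in> RB k \<Longrightarrow> (\<Sum>i\<in>UNIV. A $ i $ j) = real k"
  unfolding RB_def by blast

lemma RB_0_eq_zero: "A \<in> RB 0 \<Longrightarrow> A = 0"
  using RB_row_sum[of A 0] RB_nonneg[of A 0] by (simp add: vec_eq_iff sum_nonneg_eq_0_iff)

lemma hall_condition_RB: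
  fixes A :: "real^'n::finite^'n"
  assumes A: "A \<in> RB (Suc k)"
  shows "hall_condition UNIV (\<lambda>i. {j. A $ i $ j = 1})"
  unfolding hall_condition_def
proof (intro allI impI)
  fix S :: "'n set"
  define U where "U = \<Union>((\<lambda>i. {j. A $ i $ j = 1}) ` S)"
  have "real (Suc k) * card S = (\<Sum>i\<in>S. \<Sum>j\<in>UNIV. A $ i $ j)"
    using RB_row_sum[OF A] by simp
  also have "\<dots> = (\<Sum>i\<in>S. \<Sum>j\<in>U. A $ i $ j)"
    using RB_entry[OF A] by (intro sum.cong refl sum.mono_neutral_right) (auto simp: U_def)
  also have "\<dots> = (\<Sum>j\<in>U. \<Sum>i\<in>S. A $ i $ j)"
    by (rule sum.swap)
  also have "\<dots> \<le> (\<Sum>j\<in>U. \<Sum>i\<in>UNIV. A $ i $ j)"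
    by (intro sum_mono sum_mono2) (auto intro: RB_nonneg[OF A])
  also have "\<dots> = real (Suc k) * card U"
    using RB_col_sum[OF A] by simp
  finally show "card S \<le> card U"
    by (simp only: mult_le_cancel_left_pos of_nat_le_iff of_nat_0_less_iff zero_less_Suc)
qed

lemma RB_Suc_contains_perm:
  fixes A :: "real^'n::finite^'n"
  assumes "A \<in> RB (Suc k)"
  obtains \<sigma> where "bij \<sigma>" "\<forall>i. A $ i $ \<sigma> i = 1"
proof -
  obtain \<sigma> where "inj \<sigma>" "\<forall>i. A $ i $ \<sigma> i = 1"
    using marriage_theorem[OF _ _ hall_condition_RB[OF assms]] by auto
  then show ?thesis using that finite_UNIV_inj_surj[of \<sigma>] by (simp add: bij_def)
qed

lemma RB_diff_perm_matrix:
  assumes A: "A \<in> RB (Suc k)" and \<sigma>: "bij \<sigma>" "\<forall>i. A $ i $ \<sigma> i = 1"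
  shows "A - perm_matrix \<sigma> \<in> RB k"
  unfolding RB_def
proof (intro CollectI conjI allI)
  fix i j
  show "(A - perm_matrix \<sigma>) $ i $ j = 0 \<or> (A - perm_matrix \<sigma>) $ i $ j = 1"
    using RB_entry[OF A, of i j] \<sigma>(2) by (auto simp: perm_matrix_def)
  show "(\<Sum>j\<in>UNIV. (A - perm_matrix \<sigma>) $ i $ j) = real k"
    using RB_row_sum[OF A] perm_matrix_row_sum by (simp add: sum_subtractf)
  show "(\<Sum>i\<in>UNIV. (A - perm_matrix \<sigma>) $ i $ j) = real k"
    using RB_col_sum[OF A] perm_matrix_col_sum[OF \<sigma>(1)] by (simp add: sum_subtractf)
qed

lemma RB_sum_perm_matrices:
  fixes A :: "real^'n::finite^'n"
  assumes "A \<in> RB m"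
  shows "\<exists>\<sigma>. (\<forall>l<m. bij (\<sigma> l)) \<and> A = (\<Sum>l<m. perm_matrix (\<sigma> l))"
  using assms
proof (induction m arbitrary: A)
  case 0
  then show ?case using RB_0_eq_zero by simp
next
  case (Suc m)
  obtain \<tau> where \<tau>: "bij \<tau>" "\<forall>i. A $ i $ \<tau> i = 1"
    using RB_Suc_contains_perm[OF Suc.prems] .
  obtain \<sigma> where \<sigma>: "\<forall>l<m. bij (\<sigma> l)" "A - perm_matrix \<tau> = (\<Sum>l<m. perm_matrix (\<sigma> l))"
    using Suc.IH[OF RB_diff_perm_matrix[OF Suc.prems \<tau>]] by blast
  have "A = (\<Sum>l<Suc m. perm_matrix ((\<sigma>(m := \<tau>)) l))"
    using \<sigma>(2) by (simp add: algebra_simps)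
  moreover have "\<forall>l<Suc m. bij ((\<sigma>(m := \<tau>)) l)"
    using \<sigma>(1) \<tau>(1) by (simp add: less_Suc_eq)
  ultimately show ?case by blast
qed

lemma scaled_RB_Suc_in_convex_hull:
  fixes A :: "real^'n::finite^'n"
  assumes r: "1 \<le> r" and A: "A \<in> RB (Suc r)"
  shows "(1 / real (Suc r)) *\<^sub>R A \<in> convex hull ((\<lambda>B. (1 / real r) *\<^sub>R B) ` RB r)"
proof -
  obtain \<sigma> where \<sigma>: "\<forall>l<Suc r. bij (\<sigma> l)" and A_sum: "A = (\<Sum>l<Suc r. perm_matrix (\<sigma> l))"
    using RB_sum_perm_matrices[OF A] by blast
  have A_diff: "A - perm_matrix (\<sigma> l) \<in> RB r" if l: "l < Suc r" for l
  proof (rule RB_diff_perm_matrix[OF A \<sigma>[rule_format, OF l]], intro allI)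
    fix i
    have "perm_matrix (\<sigma> l) $ i $ \<sigma> l i \<le> (\<Sum>m<Suc r. perm_matrix (\<sigma> m) $ i $ \<sigma> l i)"
      by (rule member_le_sum) (use l in \<open>auto simp: perm_matrix_def\<close>)
    then have "1 \<le> A $ i $ \<sigma> l i"
      unfolding A_sum by (simp add: perm_matrix_def)
    then show "A $ i $ \<sigma> l i = 1" using RB_entry[OF A, of i "\<sigma> l i"] by auto
  qed
  have "(\<Sum>l<Suc r. A - perm_matrix (\<sigma> l)) = (\<Sum>l<Suc r. A) - A"
    using A_sum by (simp only: sum_subtractf)
  also have "\<dots> = real r *\<^sub>R A"
    by (simp only: sum_constant_scaleR card_lessThan) (simp add: algebra_simps)
  finally have "(1 / real (Suc r)) *\<^sub>R A
      = (\<Sum>l<Suc r. (1 / real (Suc r)) *\<^sub>R ((1 / real r) *\<^sub>R (A - perm_matrix (\<sigma> l))))"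
    using r by (simp add: scaleR_sum_right[symmetric])
  also have "\<dots> \<in> convex hull ((\<lambda>B. (1 / real r) *\<^sub>R B) ` RB r)"
    by (rule convex_sum) (auto intro: hull_inc A_diff)
  finally show ?thesis .
qed

theorem corollary5p13:
  fixes r :: nat
  assumes "1 \<le> r" and "r \<le> CARD('n::finite) - 1"
  shows "convex hull ((\<lambda>A. (1 / real (r + 1)) *\<^sub>R A) ` (RB (r + 1) :: (real^'n^'n) set))
         \<subseteq> convex hull ((\<lambda>A. (1 / real r) *\<^sub>R A) ` (RB r :: (real^'n^'n) set))"
  using scaled_RB_Suc_in_convex_hull[OF assms(1)]
  by (intro hull_minimal convex_convex_hull) auto

end
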